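(* Let $T$ be an SSYT of skew shape. (a) If $S$ is the result of a row insertion $T\leftarrow k$ (external, or internal from some row) for some positive integer $k$, then the reverse row insertion $S\rightarrow c$ results in $T$, where $c$ is the unique cell that is non-empty in $S$ but empty in $T$. (b) If $S$ is the result of $T\rightarrow c$ for some outside corner $c$ of $T$, and the final entry $k$ of $T\rightarrow c$ lands in row $r\ge0$, then $S\leftarrow_r k$ results in $T$.
   Context: Diagrams are in French notation (rows numbered from the bottom starting at 1; a partition $\lambda$ consists of the cells in column $i$, row $j$ with $1\le i\le\lambda_j$; $\lambda/\mu$ is the set difference). An SSYT of skew shape has positive integer entries weakly increasing left to right in rows and strictly increasing bottom to top in columns. An inside corner of $T$ is a cell with no cell of $T$ immediately below or left of it; an outside corner is a cell with no cell of $T$ immediately above or right of it. Row insertion: to insert $x$ starting at row $j$: if $x$ is weakly larger than all entries of row $j$ (or row $j$ is empty), put $x$ in a new cell at the right end of row $j$ (if the row is empty and the shape is $\alpha/\beta$, in column $\alpha_j+1$) and stop; otherwise replace the entry $y$ of the leftmost cell of row $j$ with entry $>x$ by $x$ and insert $y$ starting at row $j+1$. External insertion $T\leftarrow_0 k$ inserts $k$ starting at row 1. If $T$ has an inside corner in row $r\ge1$ with entry $k$, internal insertion $T\leftarrow_r k$ removes that cell and inserts $k$ starting at row $r+1$. Reverse row insertion $T\rightarrow c$, $c$ an outside corner in row $j$ with entry $k$: delete $c$ and reverse-insert $x=k$ into row $j-1$: if that row index is 0, stop ($x$ lands in row 0); else if $x$ is weakly smaller than all entries of that row $r$, place $x$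 in a new cell immediately left of the leftmost cell of row $r$ and stop ($x$ lands in row $r$); else replace the entry $y$ of the rightmost cell of row $r$ with entry $<x$ by $x$ and reverse-insert $y$ into row $r-1$. The value $x$ at termination is the final entry. *)

theory Defs
  imports Main
begin

text \<open>A skew tableau of shape alpha/beta (French notation). Row j (j \<ge> 1) is
  stored as the pair (beta_j, list of entries left to right); its cells are the
  columns beta_j+1 .. alpha_j where alpha_j = beta_j + length of the list.
  Row 0 is unused (kept as (0,[])).\<close>

type_synonym tab = "nat \<Rightarrow> nat \<times> nat list"

definition beta :: "tab \<Rightarrow> nat \<Rightarrow> nat" where
  "beta T j = fst (T j)"

definition alpha :: "tab \<Rightarrow> nat \<Rightarrow> nat" where
  "alpha T j = fst (T j) + length (snd (T j))"

definition cells :: "tab \<Rightarrow> (nat \<times> nat) set" where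
  "cells T = {(i, j). 1 \<le> j \<and> beta T j < i \<and> i \<le> alpha T j}"

definition entry :: "tab \<Rightarrow> nat \<times> nat \<Rightarrow> nat" where
  "entry T c = snd (T (snd c)) ! (fst c - beta T (snd c) - 1)"

definition skew_ssyt :: "tab \<Rightarrow> bool" where
  "skew_ssyt T \<longleftrightarrow>
     T 0 = (0, []) \<and>
     finite {j. T j \<noteq> (0, [])} \<and>
     (\<forall>j\<ge>1. beta T (Suc j) \<le> beta T j \<and> alpha T (Suc j) \<le> alpha T j) \<and>
     (\<forall>j. \<forall>y\<in>set (snd (T j)). 0 < y) \<and>
     (\<forall>j. sorted (snd (T j))) \<and>
     (\<forall>i j. (i, j) \<in> cells T \<and> (i, Suc j) \<in> cells T \<longrightarrow>
              entry T (i, j) < entry T (i, Suc j))"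

definition inside_corner :: "tab \<Rightarrow> nat \<times> nat \<Rightarrow> bool" where
  "inside_corner T c \<longleftrightarrow> c \<in> cells T \<and>
     (fst c, snd c - 1) \<notin> cells T \<and> (fst c - 1, snd c) \<notin> cells T"

definition outside_corner :: "tab \<Rightarrow> nat \<times> nat \<Rightarrow> bool" where
  "outside_corner T c \<longleftrightarrow> c \<in> cells T \<and>
     (fst c, Suc (snd c)) \<notin> cells T \<and> (Suc (fst c), snd c) \<notin> cells T"

inductive row_ins :: "tab \<Rightarrow> nat \<Rightarrow> nat \<Rightarrow> tab \<Rightarrow> bool" where
  place: "\<forall>y\<in>set (snd (T j)). y \<le> x \<Longrightarrow>
          row_ins T j x (T(j := (fst (T j), snd (T j) @ [x])))"
| bump: "\<not> (\<forall>y\<in>set (snd (T j)). y \<le> x) \<Longrightarrow>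
         p = (LEAST p. p < length (snd (T j)) \<and> x < snd (T j) ! p) \<Longrightarrow>
         row_ins (T(j := (fst (T j), (snd (T j))[p := x]))) (Suc j) (snd (T j) ! p) S \<Longrightarrow>
         row_ins T j x S"

text \<open>insert_tab T r k S: S is the result of T \<leftarrow>_r k
  (r = 0: external insertion; r \<ge> 1: internal insertion from row r).\<close>
definition insert_tab :: "tab \<Rightarrow> nat \<Rightarrow> nat \<Rightarrow> tab \<Rightarrow> bool" where
  "insert_tab T r k S \<longleftrightarrow>
     (if r = 0 then row_ins T 1 k S
      else (\<exists>i. inside_corner T (i, r) \<and> entry T (i, r) = k \<and>
                row_ins (T(r := (Suc (fst (T r)), tl (snd (T r))))) (Suc r) k S))"

text \<open>Reverse-insert x into row r; returns (tableau, landing row, final entry).\<close>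
fun rev_into :: "tab \<Rightarrow> nat \<Rightarrow> nat \<Rightarrow> tab \<times> nat \<times> nat" where
  "rev_into T 0 x = (T, 0, x)"
| "rev_into T (Suc r) x =
     (let es = snd (T (Suc r)) in
      if \<forall>y\<in>set es. x \<le> y
      then (T(Suc r := (fst (T (Suc r)) - 1, x # es)), Suc r, x)
      else (let p = (GREATEST p. p < length es \<and> es ! p < x)
            in rev_into (T(Suc r := (fst (T (Suc r)), es[p := x]))) r (es ! p)))"

definition rev_ins :: "tab \<Rightarrow> nat \<times> nat \<Rightarrow> tab \<times> nat \<times> nat" where
  "rev_ins T c =
     rev_into (T(snd c := (fst (T (snd c)), butlast (snd (T (snd c))))))
              (snd c - 1) (entry T c)"

end

theory Submission
  imports Defs
begin

text \<open>Row insertion and reverse row insertion undo each other one row at a time. If \<open>x\<close>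
  bumps the leftmost entry \<open>y > x\<close> of a sorted row, then in the updated row the old position
  of \<open>y\<close> is the rightmost one holding an entry \<open>< y\<close>, so reverse-inserting \<open>y\<close> restores
  the row and passes \<open>x\<close> on; the converse holds symmetrically. At the ends, the cell created
  by an insertion is an outside corner, and when a reverse insertion stops in row \<open>r\<close>,
  column strictness puts the new cell at an inside corner, from which internal insertion
  restarts. Uniqueness in (b) holds because row insertion is deterministic.\<close>

lemma Least_greater_nth:
  fixes l :: "'a::linorder list"
  assumes "\<not> (\<forall>y\<in>set l. y \<le> x)" and "p = (LEAST p. p < length l \<and> x < l ! p)"
  shows "p < length l \<and> x < l ! p"
proof -
  from assms(1) have "\<exists>q. q < length l \<and> x < l ! q"
    by (auto simp: in_set_conv_nth not_le)
  then show ?thesis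
    unfolding assms(2) by (rule LeastI_ex)
qed

lemma Greatest_less_nth:
  fixes l :: "'a::linorder list"
  assumes "\<not> (\<forall>y\<in>set l. x \<le> y)" and "p = (GREATEST p. p < length l \<and> l ! p < x)"
  shows "p < length l \<and> l ! p < x"
proof -
  from assms(1) obtain q where "q < length l \<and> l ! q < x"
    by (auto simp: in_set_conv_nth not_le)
  then show ?thesis
    unfolding assms(2) by (rule GreatestI_nat[where b = "length l"]) auto
qed

lemma sorted_Greatest_after_bump:
  fixes l :: "'a::linorder list"
  assumes "sorted l" "p < length l" "x < l ! p"
  shows "(GREATEST q. q < length l \<and> l[p := x] ! q < l ! p) = p"
proof (rule Greatest_equality)
  fix q assume q: "q < length l \<and> l[p := x] ! q < l ! p"
  show "q \<le> p"
  proof (rule ccontr)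
    assume "\<not> q \<le> p"
    then have "l ! p \<le> l[p := x] ! q"
      using q sorted_nth_mono[OF assms(1), of p q] by simp
    with q show False by (simp add: leD)
  qed
qed (use assms in simp)

lemma sorted_Least_after_unbump:
  fixes l :: "'a::linorder list"
  assumes "sorted l" "p < length l" "l ! p < x"
  shows "(LEAST q. q < length l \<and> l ! p < l[p := x] ! q) = p"
proof (rule Least_equality)
  fix q assume q: "q < length l \<and> l ! p < l[p := x] ! q"
  show "p \<le> q"
  proof (rule ccontr)
    assume "\<not> p \<le> q"
    then have "l[p := x] ! q \<le> l ! p"
      using q sorted_nth_mono[OF assms(1), of q p] assms(2) by auto
    with q show False by (simp add: leD)
  qed
qed (use assms in simp)

lemma mem_cells:
  "(i, j) \<in> cells T \<longleftrightarrow> 1 \<le> j \<and> fst (T j) < i \<and> i \<le> fst (T j) + length (snd (T j))"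
  by (simp add: cells_def beta_def alpha_def)

lemma cells_row_cong: "U j = T j \<Longrightarrow> (i, j) \<in> cells U \<longleftrightarrow> (i, j) \<in> cells T"
  by (simp add: mem_cells)

lemma skew_ssytD:
  assumes "skew_ssyt T"
  shows "\<And>j. 1 \<le> j \<Longrightarrow> fst (T (Suc j)) \<le> fst (T j)"
    and "\<And>j. 1 \<le> j \<Longrightarrow> alpha T (Suc j) \<le> alpha T j"
    and "\<And>j. sorted (snd (T j))"
    and "\<And>i j. (i, j) \<in> cells T \<Longrightarrow> (i, Suc j) \<in> cells T \<Longrightarrow> entry T (i, j) < entry T (i, Suc j)"
  using assms unfolding skew_ssyt_def beta_def by auto

lemma row_ins_deterministic: "row_ins T j x S \<Longrightarrow> row_ins T j x S' \<Longrightarrow> S' = S"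
proof (induction arbitrary: S' rule: row_ins.induct)
  case (place T j x)
  from place.prems show ?case
    by cases (use place.hyps in auto)
next
  case (bump T j x p S)
  from bump.prems show ?case
  proof cases
    case (bump p')
    then have "p' = p"
      using bump.hyps(2) by simp
    then show ?thesis
      using bump.IH \<open>row_ins _ (Suc j) _ S'\<close> by blast
  qed (use bump.hyps(1) in simp)
qed

lemma insert_tab_deterministic: "insert_tab T r k S \<Longrightarrow> insert_tab T r k S' \<Longrightarrow> S' = S"
  unfolding insert_tab_def by (cases "r = 0") (auto intro: row_ins_deterministic)

lemma rev_into_after_bump:
  assumes "sorted l" and "T (Suc j) = (b, l)"
    and "\<not> (\<forall>y\<in>set l. y \<le> x)" and "p = (LEAST p. p < length l \<and> x < l ! p)"
  shows "rev_into (T(Suc j := (b, l[p := x]))) (Suc j) (l ! p) = rev_into T j x"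
proof -
  have p: "p < length l \<and> x < l ! p"
    using assms(3,4) by (rule Least_greater_nth)
  then have "(\<forall>y\<in>set (l[p := x]). l ! p \<le> y) \<longleftrightarrow> False"
    by (meson leD set_update_memI)
  moreover have "T(Suc j := (b, l)) = T"
    using assms(2) by auto
  ultimately show ?thesis
    using p by (simp only: rev_into.simps Let_def if_False fun_upd_same snd_conv fst_conv
        fun_upd_upd length_list_update sorted_Greatest_after_bump[OF assms(1)] nth_list_update_eq
        list_update_overwrite list_update_id)
qed

lemma row_ins_after_unbump:
  assumes "sorted es" and "U j = (b, es)"
    and "\<not> (\<forall>y\<in>set es. x \<le> y)" and "p = (GREATEST p. p < length es \<and> es ! p < x)"
    and "row_ins U (Suc j) x T"
  shows "row_ins (U(j := (b, es[p := x]))) j (es ! p) T"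
proof -
  let ?U' = "U(j := (b, es[p := x]))"
  have p: "p < length es \<and> es ! p < x"
    using assms(3,4) by (rule Greatest_less_nth)
  then have "x \<in> set (es[p := x])"
    by (simp add: set_update_memI)
  with p have "\<not> (\<forall>y\<in>set (snd (?U' j)). y \<le> es ! p)"
    by (auto dest: leD)
  moreover have "p = (LEAST q. q < length (snd (?U' j)) \<and> es ! p < snd (?U' j) ! q)"
    using sorted_Least_after_unbump[OF assms(1)] p by simp
  moreover have "U(j := (b, es)) = U"
    using assms(2) by auto
  then have "row_ins (?U'(j := (fst (?U' j), (snd (?U' j))[p := es ! p]))) (Suc j) (snd (?U' j) ! p) T"
    using assms(5) p by simp
  ultimately show ?thesis
    by (rule row_ins.bump)
qed

lemma rev_ins_after_row_ins:
  assumes "row_ins T j x S" and "1 \<le> j"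
    and "\<forall>i\<ge>j. sorted (snd (T i))" and "\<forall>i\<ge>j. alpha T (Suc i) \<le> alpha T i"
  shows "\<exists>c. cells S - cells T = {c} \<and> outside_corner S c \<and> j \<le> snd c \<and>
             rev_ins S c = rev_into T (j - 1) x"
  using assms
proof (induction rule: row_ins.induct)
  case (place T j x)
  obtain b l where Tj: "T j = (b, l)"
    by fastforce
  define S where "S = T(j := (b, l @ [x]))"
  define c where "c = (b + length l + 1, j)"
  have "cells S - cells T = {c}"
    using Tj place.prems(1) by (auto simp: S_def c_def mem_cells split: if_splits)
  moreover have "outside_corner S c"
    using Tj place.prems by (auto simp: outside_corner_def S_def c_def mem_cells alpha_def)
  moreover have "rev_ins S c = rev_into T (j - 1) x"
    using Tj by (simp add: rev_ins_def S_def c_def entry_def beta_def fun_upd_idem)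
  moreover have "j \<le> snd c"
    by (simp add: c_def)
  ultimately show ?case
    unfolding Tj fst_conv snd_conv S_def[symmetric] by blast
next
  case (bump T j x p S)
  obtain b l where Tj: "T j = (b, l)"
    by fastforce
  define T' where "T' = T(j := (b, l[p := x]))"
  obtain j0 where j0: "j = Suc j0"
    using bump.prems(1) by (cases j) auto
  have "\<exists>c. cells S - cells T' = {c} \<and> outside_corner S c \<and> Suc j \<le> snd c \<and>
            rev_ins S c = rev_into T' j (l ! p)"
    using bump.IH bump.prems Tj unfolding T'_def by (simp add: alpha_def fun_upd_def)
  moreover have "cells T' = cells T"
    using Tj by (auto simp: T'_def mem_cells split: if_splits)
  moreover have "rev_into T' j (l ! p) = rev_into T j0 x"
    unfolding T'_def j0
    by (rule rev_into_after_bump) (use bump.hyps(1,2) bump.prems(2) Tj j0 in auto)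
  ultimately show ?case
    using j0 by fastforce
qed

lemma insert_tab_after_landing:
  assumes T: "skew_ssyt T"
    and rows: "\<forall>i. 1 \<le> i \<and> i \<le> Suc m \<longrightarrow> U i = T i"
    and row: "T (Suc m) = (b, es)"
    and ge: "\<forall>y\<in>set es. x \<le> y"
    and above: "(q, Suc (Suc m)) \<in> cells T" "entry T (q, Suc (Suc m)) = x"
    and ins: "row_ins U (Suc (Suc m)) x T"
  shows "insert_tab (U(Suc m := (b - 1, x # es))) (Suc m) x T"
proof -
  define S where "S = U(Suc m := (b - 1, x # es))"
  \<comment> \<open>\<open>x\<close> sits in column \<open>q\<close> above row \<open>m + 1\<close> but is at most every entry of that row,
    so by column strictness that row starts right of \<open>q \<ge> 1\<close>: the landing cell has column \<open>b \<ge> 1\<close>.\<close>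
  have "(q, Suc m) \<notin> cells T"
  proof
    assume below: "(q, Suc m) \<in> cells T"
    then have "entry T (q, Suc m) < x"
      using skew_ssytD(4)[OF T below above(1)] above(2) by simp
    moreover have "entry T (q, Suc m) \<in> set es"
      using below row by (auto simp: entry_def beta_def mem_cells)
    ultimately show False
      using ge by (auto dest: leD)
  qed
  moreover have "q \<le> alpha T (Suc m)"
    using skew_ssytD(2)[OF T, of "Suc m"] above(1) by (simp add: mem_cells alpha_def)
  ultimately have b: "1 \<le> b"
    using above(1) row by (auto simp: mem_cells alpha_def)
  have S_row: "S (Suc m) = (b - 1, x # es)"
    by (simp add: S_def)
  have "(b, m) \<notin> cells S"
  proof (cases m)
    case (Suc m')
    then have "S m = T m" and "fst (T (Suc m)) \<le> fst (T m)"
      using rows skew_ssytD(1)[OF T, of m] by (auto simp: S_def)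
    then show ?thesis
      using row by (simp add: mem_cells)
  qed (simp add: mem_cells)
  then have "inside_corner S (b, Suc m)"
    using S_row b by (simp add: inside_corner_def mem_cells)
  moreover have "entry S (b, Suc m) = x"
    using S_row b by (simp add: entry_def beta_def)
  moreover have "S(Suc m := (Suc (fst (S (Suc m))), tl (snd (S (Suc m))))) = U"
    using b rows row by (auto simp: S_def)
  ultimately show ?thesis
    using ins unfolding S_def[symmetric] insert_tab_def by auto
qed

lemma insert_tab_after_rev_into:
  assumes T: "skew_ssyt T"
  shows "rev_into U n x = (S, r, k) \<Longrightarrow> row_ins U (Suc n) x T \<Longrightarrow>
    \<forall>i. 1 \<le> i \<and> i \<le> n \<longrightarrow> U i = T i \<Longrightarrow>
    (q, Suc n) \<in> cells T \<Longrightarrow> entry T (q, Suc n) = x \<Longrightarrow> insert_tab S r k T"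
proof (induction n arbitrary: U x q)
  case 0
  then show ?case
    by (simp add: insert_tab_def)
next
  case (Suc m)
  obtain b es where row: "T (Suc m) = (b, es)"
    by fastforce
  have U_row: "U (Suc m) = (b, es)"
    using Suc.prems(3) row by simp
  show ?case
  proof (cases "\<forall>y\<in>set es. x \<le> y")
    case True
    then have "S = U(Suc m := (b - 1, x # es))" and "r = Suc m" and "k = x"
      using Suc.prems(1) U_row by auto
    then show ?thesis
      using insert_tab_after_landing[OF T Suc.prems(3) row True Suc.prems(4,5,2)] by (simp only:)
  next
    case False
    define p where "p = (GREATEST p. p < length es \<and> es ! p < x)"
    have p: "p < length es \<and> es ! p < x"
      using False p_def by (rule Greatest_less_nth)
    have "rev_into (U(Suc m := (b, es[p := x]))) m (es ! p) = (S, r, k)"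
      using Suc.prems(1) U_row False by (simp add: Let_def p_def)
    moreover have "row_ins (U(Suc m := (b, es[p := x]))) (Suc m) (es ! p) T"
      using skew_ssytD(3)[OF T, of "Suc m"] U_row False p_def Suc.prems(2)
      by (simp add: row row_ins_after_unbump)
    moreover have "\<forall>i. 1 \<le> i \<and> i \<le> m \<longrightarrow> (U(Suc m := (b, es[p := x]))) i = T i"
      using Suc.prems(3) by auto
    moreover have "(b + p + 1, Suc m) \<in> cells T" and "entry T (b + p + 1, Suc m) = es ! p"
      using row p by (simp_all add: mem_cells entry_def beta_def)
    ultimately show ?thesis
      by (rule Suc.IH)
  qed
qed

lemma rev_ins_after_insert_tab:
  assumes T: "skew_ssyt T" and ins: "insert_tab T r k S"
  shows "\<exists>c. cells S - cells T = {c} \<and> outside_corner S c \<and> fst (rev_ins S c) = T"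
proof (cases "r = 0")
  case True
  then have "row_ins T 1 k S"
    using ins by (simp add: insert_tab_def)
  then show ?thesis
    using rev_ins_after_row_ins[of T 1 k S] skew_ssytD(2,3)[OF T] by fastforce
next
  case False
  then obtain i where corner: "inside_corner T (i, r)" and k: "entry T (i, r) = k"
    and ins': "row_ins (T(r := (Suc (fst (T r)), tl (snd (T r))))) (Suc r) k S"
    using ins by (auto simp: insert_tab_def)
  obtain b l where row: "T r = (b, l)"
    by fastforce
  define T' where "T' = T(r := (Suc b, tl l))"
  have "i = Suc b" and "l \<noteq> []"
    using corner row by (auto simp: inside_corner_def mem_cells)
  with k row have k_hd: "k = hd l"
    by (simp add: entry_def beta_def hd_conv_nth)
  obtain c where c: "cells S - cells T' = {c}" "outside_corner S c" "Suc r \<le> snd c"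
    "rev_ins S c = rev_into T' r k"
    using rev_ins_after_row_ins[of T' "Suc r" k S] ins' row skew_ssytD(2,3)[OF T] False
    by (fastforce simp: T'_def alpha_def)
  have "cells T' \<subseteq> cells T"
    using row by (auto simp: T'_def mem_cells split: if_splits)
  moreover have "c \<notin> cells T"
    using c(1,3) cells_row_cong[of T' "snd c" T "fst c"] by (auto simp: T'_def)
  ultimately have "cells S - cells T = {c}"
    using c(1) by blast
  moreover have "\<forall>y\<in>set (tl l). k \<le> y"
    using skew_ssytD(3)[OF T, of r] row \<open>l \<noteq> []\<close> k_hd by (cases l) auto
  then have "rev_into T' r k = (T, r, k)"
    using False row k_hd \<open>l \<noteq> []\<close> by (cases r) (auto simp: T'_def)
  ultimately show ?thesis
    using c(2,4) by auto
qed

lemma insert_tab_after_rev_ins: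
  assumes T: "skew_ssyt T" and corner: "outside_corner T c" and rev: "rev_ins T c = (S, r, k)"
  shows "insert_tab S r k T"
proof -
  obtain i j where c: "c = (i, j)"
    by fastforce
  obtain b l where row: "T j = (b, l)"
    by fastforce
  have "(i, j) \<in> cells T" and "(Suc i, j) \<notin> cells T"
    using corner c by (auto simp: outside_corner_def)
  then have j: "1 \<le> j" and i: "i = b + length l" and "l \<noteq> []"
    using row by (auto simp: mem_cells)
  define T0 where "T0 = T(j := (b, butlast l))"
  have entry: "entry T (i, j) = last l"
    using i row \<open>l \<noteq> []\<close> by (simp add: entry_def beta_def last_conv_nth)
  then have "rev_into T0 (j - 1) (last l) = (S, r, k)"
    using rev c row by (simp add: rev_ins_def T0_def)
  moreover have "row_ins T0 (Suc (j - 1)) (last l) T"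
  proof -
    have "sorted (butlast l @ [last l])"
      using skew_ssytD(3)[OF T, of j] row \<open>l \<noteq> []\<close> by simp
    then have "\<forall>y\<in>set (snd (T0 j)). y \<le> last l"
      by (simp add: T0_def sorted_append)
    then have "row_ins T0 j (last l) (T0(j := (fst (T0 j), snd (T0 j) @ [last l])))"
      by (rule row_ins.place)
    then show ?thesis
      using row j \<open>l \<noteq> []\<close> by (simp add: T0_def fun_upd_idem)
  qed
  moreover have "\<forall>i'. 1 \<le> i' \<and> i' \<le> j - 1 \<longrightarrow> T0 i' = T i'"
    by (auto simp: T0_def)
  moreover have "(i, Suc (j - 1)) \<in> cells T" and "entry T (i, Suc (j - 1)) = last l"
    using \<open>(i, j) \<in> cells T\<close> entry j by simp_all
  ultimately show ?thesis
    by (rule insert_tab_after_rev_into[OF T])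
qed

theorem lemma4p7:
  shows "(\<forall>T r k S. skew_ssyt T \<and> 0 < k \<and> insert_tab T r k S \<longrightarrow>
            (\<exists>c. cells S - cells T = {c} \<and> outside_corner S c \<and>
                 fst (rev_ins S c) = T))
       \<and> (\<forall>T c S r k. skew_ssyt T \<and> outside_corner T c \<and> rev_ins T c = (S, r, k) \<longrightarrow>
            insert_tab S r k T \<and> (\<forall>T'. insert_tab S r k T' \<longrightarrow> T' = T))"
  using rev_ins_after_insert_tab insert_tab_after_rev_ins insert_tab_deterministic by blast

end
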